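(* For $c\in(0,\tfrac12]$ and a path $\xi=x_1x_2\cdots\in\Omega$ put \[ K^{(c)}_n(\xi):=\prod_{j=2}^{n}\bigl(1-c\,\overline{x}_{j-1}x_j\bigr)\qquad(K^{(c)}_0=K^{(c)}_1=1). \] This is the capital of the multiplicative contrarian strategy $\mathcal{P}_c$: $M_n=-c\,\overline{x}_{n-1}\mathcal{K}_{n-1}$ with initial capital $1$. Let Skeptic follow the mixture $\mathcal{Q}=\sum_{i\ge1}2^{-i}\mathcal{P}_{2^{-i}}$ with initial capital $1$. His capital is then \[ \mathcal{K}_n=\sum_{i\ge1}2^{-i}K^{(2^{-i})}_n . \] Then $\mathcal{K}_n(\xi)\ge 0$ for all $\xi\in\Omega$ and all $n$. Moreover $\mathcal{K}_n(\xi)\to\infty$ as $n\to\infty$ for every path $\xi\notin E_1$, where \[ E_1:=\{\xi:\ \limsup_{n\to\infty}\sqrt n\,|\overline{x}_n|\ge 1\}. \] Equivalently, Skeptic can force $E_1$ by $\mathcal{Q}$.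
   Context: Fair-coin game: the initial capital is $\mathcal{K}_0$. In rounds $n=1,2,\dots$ Skeptic announces $M_n\in\mathbb{R}$, then Reality announces $x_n\in\{-1,1\}$, and $\mathcal{K}_n:=\mathcal{K}_{n-1}+M_nx_n$. Skeptic's move may depend only on $x_1,\dots,x_{n-1}$. A path is an infinite sequence $\xi=x_1x_2\cdots\in\{-1,1\}^{\mathbb{N}}$, and $\Omega$ is the set of paths. We write $s_n:=x_1+\cdots+x_n$ and $\overline{x}_n:=s_n/n$, with $s_0=\overline{x}_0=0$. A strategy $\mathcal{P}$ assigns a real number to each finite sequence (situation). Its capital process with zero initial capital is $\mathcal{K}^{\mathcal{P}}_n(\xi)=\sum_{k=1}^n\mathcal{P}(x_1\cdots x_{k-1})x_k$. Skeptic forces an event $E\subseteq\Omega$ if there is a strategy $\mathcal{P}$ such that $\mathcal{K}^{\mathcal{P}}_n(\xi)\ge-1$ for all $\xi\in\Omega$ and all $n\ge0$, and $\lim_n\mathcal{K}^{\mathcal{P}}_n(\xi)=\infty$ for all $\xi\notin E$. Equivalently, the capital started from $1$ stays nonnegative and tends to infinity off $E$. *)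

theory Defs
  imports Complex_Main "HOL-Library.Liminf_Limsup" "HOL-Library.Extended_Real"
begin

text \<open>A path is \<open>\<xi> :: nat \<Rightarrow> real\<close>; the moves are \<open>x_n = \<xi> n\<close> for \<open>n \<ge> 1\<close>
  (the value \<open>\<xi> 0\<close> is irrelevant and never used).\<close>

definition Omega :: "(nat \<Rightarrow> real) set" where
  "Omega = {\<xi>. \<forall>n\<ge>1. \<xi> n \<in> {-1, 1}}"

text \<open>\<open>xbar \<xi> n = s_n / n\<close>, with \<open>xbar \<xi> 0 = 0\<close> (division by zero is 0).\<close>
definition xbar :: "(nat \<Rightarrow> real) \<Rightarrow> nat \<Rightarrow> real" where
  "xbar \<xi> n = (\<Sum>k=1..n. \<xi> k) / real n"

definition Kc :: "real \<Rightarrow> (nat \<Rightarrow> real) \<Rightarrow> nat \<Rightarrow> real" where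
  "Kc c \<xi> n = (\<Prod>j=2..n. (1 - c * xbar \<xi> (j - 1) * \<xi> j))"

definition Kmix :: "(nat \<Rightarrow> real) \<Rightarrow> nat \<Rightarrow> real" where
  "Kmix \<xi> n = (\<Sum>i. (1/2) ^ Suc i * Kc ((1/2) ^ Suc i) \<xi> n)"

definition E1 :: "(nat \<Rightarrow> real) set" where
  "E1 = {\<xi> \<in> Omega. limsup (\<lambda>n. ereal (sqrt (real n) * \<bar>xbar \<xi> n\<bar>)) \<ge> 1}"

text \<open>Situations are finite lists \<open>[x_1, ..., x_m]\<close>; a strategy maps situations to moves.\<close>
definition capital :: "(real list \<Rightarrow> real) \<Rightarrow> (nat \<Rightarrow> real) \<Rightarrow> nat \<Rightarrow> real" where
  "capital P \<xi> n = (\<Sum>k=1..n. P (map \<xi> [1..<k]) * \<xi> k)"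

definition forces :: "(real list \<Rightarrow> real) \<Rightarrow> (nat \<Rightarrow> real) set \<Rightarrow> bool" where
  "forces P E \<longleftrightarrow> (\<forall>\<xi>\<in>Omega. \<forall>n. capital P \<xi> n \<ge> -1) \<and>
     (\<forall>\<xi>\<in>Omega. \<xi> \<notin> E \<longrightarrow> filterlim (capital P \<xi>) at_top sequentially)"

text \<open>List versions: mean of a situation and the capital \<open>K^{(c)}_m\<close> after situation
  \<open>[x_1,...,x_m]\<close>.\<close>
definition mean :: "real list \<Rightarrow> real" where
  "mean s = sum_list s / real (length s)"

definition Kl :: "real \<Rightarrow> real list \<Rightarrow> real" where
  "Kl c s = (\<Prod>j\<in>{1..<length s}. (1 - c * mean (take j s) * s ! j))"

definition Pc :: "real \<Rightarrow> real list \<Rightarrow> real" where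
  "Pc c s = - c * mean s * Kl c s"

definition Q :: "real list \<Rightarrow> real" where
  "Q s = (\<Sum>i. (1/2) ^ Suc i * Pc ((1/2) ^ Suc i) s)"

end

theory Submission
  imports Defs
begin

text \<open>Every factor \<open>1 - c xbar_{j-1} x_j\<close> of \<open>K^{(c)}_n\<close> lies in \<open>[1 - c, 1 + c]\<close>, so for
  \<open>c \<le> 1/2\<close> the capitals \<open>K^{(c)}_n\<close> are positive and bounded by \<open>2^n\<close>. Hence the mixture
  converges, capital (which is linear in the strategy) commutes with the infinite sum, and as
  the capital of \<open>P_c\<close> telescopes to \<open>K^{(c)}_n - 1\<close>, the capital of \<open>Q\<close> is the mixture minus 1.

  Off \<open>E_1\<close> there are \<open>a < 1\<close> and \<open>N\<close> with \<open>s_n^2/n \<le> a\<close> for all \<open>n \<ge> N\<close>. For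
  \<open>c \<le> (1 - a)/8\<close> the estimate \<open>ln (1 + u) \<ge> u - 2u^2\<close> shows that
  \<open>ln K^{(c)}_n + (c/2) s_n^2/n - (c (1 - a)/4) ln n\<close> is nondecreasing from \<open>N\<close> on, so
  \<open>K^{(c)}_n\<close> grows at least like a positive power of \<open>n\<close>. Already this single term of the
  mixture diverges.\<close>

lemma Omega_abs_eq_1: "\<xi> \<in> Omega \<Longrightarrow> 1 \<le> n \<Longrightarrow> \<bar>\<xi> n\<bar> = 1"
  by (auto simp: Omega_def)

lemma Omega_power2_eq_1: "\<xi> \<in> Omega \<Longrightarrow> 1 \<le> n \<Longrightarrow> \<xi> n ^ 2 = 1"
  by (auto simp: Omega_def)

lemma abs_xbar_le_1:
  assumes "\<xi> \<in> Omega"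
  shows "\<bar>xbar \<xi> n\<bar> \<le> 1"
proof (cases "n = 0")
  case True
  then show ?thesis by (simp add: xbar_def)
next
  case False
  have "\<bar>\<Sum>k=1..n. \<xi> k\<bar> \<le> (\<Sum>k=1..n. \<bar>\<xi> k\<bar>)" by (rule sum_abs)
  also have "\<dots> = real n" using Omega_abs_eq_1[OF assms] by simp
  finally show ?thesis using False by (simp add: xbar_def abs_divide)
qed

lemma Kc_Suc: "Kc c \<xi> (Suc m) = Kc c \<xi> m * (1 - c * xbar \<xi> m * \<xi> (Suc m))"
proof (cases "m = 0")
  case True
  then show ?thesis by (simp add: Kc_def xbar_def)
next
  case False
  then have "{2..Suc m} = insert (Suc m) {2..m}" by auto
  then show ?thesis by (simp add: Kc_def mult.commute)
qed

lemma abs_c_xbar_mult_le: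
  assumes "\<xi> \<in> Omega" "0 \<le> c"
  shows "\<bar>c * xbar \<xi> m * \<xi> (Suc m)\<bar> \<le> c"
  using assms abs_xbar_le_1[OF assms(1), of m] Omega_abs_eq_1[OF assms(1), of "Suc m"]
  by (simp add: abs_mult mult_left_le)

lemma Kc_pos:
  assumes "\<xi> \<in> Omega" "0 \<le> c" "c < 1"
  shows "0 < Kc c \<xi> n"
proof (induction n)
  case 0
  then show ?case by (simp add: Kc_def)
next
  case (Suc n)
  have "0 < 1 - c * xbar \<xi> n * \<xi> (Suc n)"
    using abs_c_xbar_mult_le[OF assms(1,2), of n] assms(3) by linarith
  with Suc show ?case by (simp add: Kc_Suc)
qed

lemma abs_Kc_le_power:
  assumes "\<xi> \<in> Omega" "0 \<le> c"
  shows "\<bar>Kc c \<xi> n\<bar> \<le> (1 + c) ^ n"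
proof (induction n)
  case 0
  then show ?case by (simp add: Kc_def)
next
  case (Suc n)
  have "\<bar>1 - c * xbar \<xi> n * \<xi> (Suc n)\<bar> \<le> 1 + c"
    using abs_c_xbar_mult_le[OF assms, of n] by linarith
  with Suc have "\<bar>Kc c \<xi> n\<bar> * \<bar>1 - c * xbar \<xi> n * \<xi> (Suc n)\<bar> \<le> (1 + c) ^ n * (1 + c)"
    by (intro mult_mono) auto
  then show ?case by (simp add: Kc_Suc abs_mult mult.commute)
qed

lemma abs_Kc_le_2_power:
  assumes "\<xi> \<in> Omega" "0 \<le> c" "c \<le> 1"
  shows "\<bar>Kc c \<xi> n\<bar> \<le> 2 ^ n"
proof -
  have "(1 + c) ^ n \<le> 2 ^ n" using assms(2,3) by (intro power_mono) auto
  with abs_Kc_le_power[OF assms(1,2)] show ?thesis by (rule order_trans)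
qed

lemma mean_map_upt: "mean (map \<xi> [1..<Suc m]) = xbar \<xi> m"
  by (simp add: mean_def xbar_def sum_set_upt_conv_sum_list_nat[symmetric]
      atLeastLessThanSuc_atLeastAtMost del: upt_Suc)

lemma Kc_eq_prod_atLeastLessThan: "Kc c \<xi> m = (\<Prod>j\<in>{1..<m}. 1 - c * xbar \<xi> j * \<xi> (Suc j))"
proof (induction m)
  case 0
  then show ?case by (simp add: Kc_def)
next
  case (Suc m)
  then show ?case by (cases "m = 0") (simp_all add: Kc_def Kc_Suc prod.atLeastLessThan_Suc)
qed

lemma Kl_map_upt: "Kl c (map \<xi> [1..<Suc m]) = Kc c \<xi> m"
  unfolding Kl_def Kc_eq_prod_atLeastLessThan
proof (rule prod.cong)
  fix j assume "j \<in> {1..<m}"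
  then have "take j (map \<xi> [1..<Suc m]) = map \<xi> [1..<Suc j]" "map \<xi> [1..<Suc m] ! j = \<xi> (Suc j)"
    by (simp_all add: take_map del: upt_Suc)
  then show "1 - c * mean (take j (map \<xi> [1..<Suc m])) * map \<xi> [1..<Suc m] ! j
      = 1 - c * xbar \<xi> j * \<xi> (Suc j)"
    by (simp only: mean_map_upt)
qed simp

lemma Pc_map_upt: "Pc c (map \<xi> [1..<Suc m]) = - c * xbar \<xi> m * Kc c \<xi> m"
  unfolding Pc_def Kl_map_upt mean_map_upt by simp

lemma abs_Pc_map_upt_le_2_power:
  assumes "\<xi> \<in> Omega" "0 \<le> c" "c \<le> 1"
  shows "\<bar>Pc c (map \<xi> [1..<Suc m])\<bar> \<le> 2 ^ m"
proof -
  have "\<bar>c * xbar \<xi> m\<bar> \<le> 1"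
    using assms abs_xbar_le_1[OF assms(1), of m] by (simp add: abs_mult mult_le_one)
  then have "\<bar>c * xbar \<xi> m\<bar> * \<bar>Kc c \<xi> m\<bar> \<le> 1 * 2 ^ m"
    using abs_Kc_le_2_power[OF assms] by (intro mult_mono) auto
  then show ?thesis unfolding Pc_map_upt using assms(2) by (simp add: abs_mult)
qed

lemma capital_Pc: "capital (Pc c) \<xi> n = Kc c \<xi> n - 1"
proof (induction n)
  case 0
  then show ?case by (simp add: capital_def Kc_def)
next
  case (Suc n)
  have "capital (Pc c) \<xi> (Suc n) = capital (Pc c) \<xi> n + Pc c (map \<xi> [1..<Suc n]) * \<xi> (Suc n)"
    by (simp add: capital_def del: upt_Suc)
  also have "\<dots> = Kc c \<xi> (Suc n) - 1"
    by (simp only: Suc.IH Pc_map_upt) (simp add: Kc_Suc algebra_simps)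
  finally show ?case .
qed

lemma capital_const_mult: "capital (\<lambda>s. w * P s) \<xi> n = w * capital P \<xi> n"
  by (simp add: capital_def sum_distrib_left mult.assoc)

lemma capital_suminf:
  assumes "\<And>k. k \<in> {1..n} \<Longrightarrow> summable (\<lambda>i. P i (map \<xi> [1..<k]))"
  shows "capital (\<lambda>s. \<Sum>i. P i s) \<xi> n = (\<Sum>i. capital (P i) \<xi> n)"
proof -
  have "capital (\<lambda>s. \<Sum>i. P i s) \<xi> n = (\<Sum>k=1..n. \<Sum>i. P i (map \<xi> [1..<k]) * \<xi> k)"
    unfolding capital_def using assms by (intro sum.cong refl suminf_mult2)
  also have "\<dots> = (\<Sum>i. \<Sum>k=1..n. P i (map \<xi> [1..<k]) * \<xi> k)"
    using assms by (intro suminf_sum[symmetric] summable_mult2)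
  finally show ?thesis unfolding capital_def .
qed

lemma summable_half_powers_mult_bounded:
  fixes f :: "nat \<Rightarrow> real"
  assumes "\<And>i. \<bar>f i\<bar> \<le> B"
  shows "summable (\<lambda>i. (1/2) ^ Suc i * f i)"
proof (rule summable_comparison_test')
  show "summable (\<lambda>i. B * (1/2::real) ^ Suc i)"
    using summable_mult[OF sums_summable[OF power_half_series]] .
  show "norm ((1/2) ^ Suc i * f i) \<le> B * (1/2) ^ Suc i" for i
    using assms[of i] by (simp add: abs_mult)
qed

lemma half_power_Suc_le: "(1/2::real) ^ Suc i \<le> 1/2"
  using power_le_one[of "1/2::real" i] by simp

lemma summable_Kmix:
  assumes "\<xi> \<in> Omega"
  shows "summable (\<lambda>i. (1/2) ^ Suc i * Kc ((1/2) ^ Suc i) \<xi> n)"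
proof (rule summable_half_powers_mult_bounded)
  show "\<bar>Kc ((1/2) ^ Suc i) \<xi> n\<bar> \<le> 2 ^ n" for i
    using abs_Kc_le_2_power[OF assms] half_power_Suc_le[of i] by simp
qed

lemma Kmix_eq_1_plus_capital_Q:
  assumes "\<xi> \<in> Omega"
  shows "Kmix \<xi> n = 1 + capital Q \<xi> n"
proof -
  define w :: "nat \<Rightarrow> real" where "w i = (1/2) ^ Suc i" for i
  have w: "0 \<le> w i" "w i \<le> 1" for i
    using half_power_Suc_le[of i] by (simp_all add: w_def)
  have "summable (\<lambda>i. w i * Pc (w i) (map \<xi> [1..<k]))" if k: "k \<in> {1..n}" for k
  proof -
    obtain m where "k = Suc m" using k by (cases k) auto
    then show ?thesis unfolding w_def
      using abs_Pc_map_upt_le_2_power[OF assms w[unfolded w_def]]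
      by (intro summable_half_powers_mult_bounded) blast
  qed
  then have "capital Q \<xi> n = (\<Sum>i. capital (\<lambda>s. w i * Pc (w i) s) \<xi> n)"
    unfolding Q_def w_def[symmetric] by (rule capital_suminf)
  also have "\<dots> = (\<Sum>i. w i * Kc (w i) \<xi> n - w i)"
    by (simp add: capital_const_mult capital_Pc right_diff_distrib)
  also have "\<dots> = Kmix \<xi> n - 1"
    using suminf_diff[OF summable_Kmix[OF assms] sums_summable[OF power_half_series]]
      power_half_series
    by (simp add: Kmix_def w_def sums_iff)
  finally show ?thesis by simp
qed

lemma Kmix_ge_term:
  assumes "\<xi> \<in> Omega"
  shows "(1/2) ^ Suc i * Kc ((1/2) ^ Suc i) \<xi> n \<le> Kmix \<xi> n"
proof -
  have "0 \<le> (1/2::real) ^ Suc j * Kc ((1/2) ^ Suc j) \<xi> n" for j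
    using Kc_pos[OF assms, of "(1/2) ^ Suc j" n] half_power_Suc_le[of j] by simp
  then have "(\<Sum>j\<in>{i}. (1/2) ^ Suc j * Kc ((1/2) ^ Suc j) \<xi> n) \<le> Kmix \<xi> n"
    unfolding Kmix_def by (intro sum_le_suminf summable_Kmix[OF assms]) auto
  then show ?thesis by simp
qed

lemma Kmix_pos:
  assumes "\<xi> \<in> Omega"
  shows "0 < Kmix \<xi> n"
  using Kmix_ge_term[OF assms, of 0 n] Kc_pos[OF assms, of "1/2" n] by simp

lemma ln_Kc_Suc_ge:
  assumes "\<xi> \<in> Omega" "0 \<le> c" "c \<le> 1/2"
  shows "ln (Kc c \<xi> m) - c * xbar \<xi> m * \<xi> (Suc m) - 2 * (c * xbar \<xi> m)^2 \<le> ln (Kc c \<xi> (Suc m))"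
proof -
  define u where "u = - (c * xbar \<xi> m * \<xi> (Suc m))"
  have "\<bar>u\<bar> \<le> 1/2" using abs_c_xbar_mult_le[OF assms(1,2), of m] assms(3) by (simp add: u_def)
  then have "u - 2 * u^2 \<le> ln (1 + u)"
    using abs_ln_one_plus_x_minus_x_bound[of u] by (simp add: abs_le_iff)
  moreover have "u^2 = (c * xbar \<xi> m)^2"
    using Omega_power2_eq_1[OF assms(1), of "Suc m"] by (simp add: u_def power_mult_distrib)
  moreover have "ln (Kc c \<xi> (Suc m)) = ln (Kc c \<xi> m) + ln (1 + u)"
  proof -
    have "Kc c \<xi> (Suc m) = Kc c \<xi> m * (1 + u)" by (simp add: Kc_Suc u_def)
    moreover have "0 < Kc c \<xi> m" "0 < 1 + u"
      using Kc_pos[OF assms(1,2)] assms(3) \<open>\<bar>u\<bar> \<le> 1/2\<close> by auto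
    ultimately show ?thesis by (simp add: ln_mult)
  qed
  ultimately show ?thesis by (simp add: u_def)
qed

text \<open>With \<open>S = s_m\<close> and \<open>x = x_{m+1}\<close>: the first two terms of \<open>ln (1 + u)\<close>, \<open>u = -c x S/m\<close>,
  exceed the decrease of \<open>(c/2) s_n^2/n\<close> from \<open>n = m\<close> to \<open>n = m + 1\<close> by at least \<open>c (1 - a)/(4m)\<close>.\<close>

lemma contrarian_drift_ge:
  fixes S x m c a :: real
  assumes "0 < m" "x^2 = 1" "S^2/m \<le> a" "(S + x)^2/(m + 1) \<le> a" "0 \<le> c" "c \<le> (1 - a)/8" "a \<le> 1"
  shows "c/2 * (S^2/m - (S + x)^2/(m + 1)) + c * (1 - a)/4/m \<le> - c * (S/m) * x - 2 * (c * (S/m))^2"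
proof -
  have "- c * (S/m) * x = c/2 * (S^2/m - (S + x)^2/(m + 1)) + c/2 * (1 - (S + x)^2/(m + 1))/m"
  proof -
    define q where "q = (S + x)^2/(m + 1)"
    have "S^2 + 2 * S * x + 1 = q * (m + 1)"
      using assms(1,2) by (simp add: q_def power2_sum)
    then show ?thesis using assms(1) unfolding q_def[symmetric] by (simp add: field_simps) algebra
  qed
  moreover have "c/2 * (1 - a)/m \<le> c/2 * (1 - (S + x)^2/(m + 1))/m"
    using assms by (intro divide_right_mono mult_left_mono) auto
  moreover have "2 * (c * (S/m))^2 \<le> c * (1 - a)/4/m"
  proof -
    have "c^2 * (S^2/m) \<le> c^2 * a"
      using assms(3) by (intro mult_left_mono) auto
    also have "\<dots> \<le> c * c"
      using assms(5,7) by (simp add: power2_eq_square mult_left_le mult_left_mono)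
    also have "\<dots> \<le> c * ((1 - a)/8)"
      using assms(5,6) by (intro mult_left_mono)
    finally have bound: "c^2 * (S^2/m) \<le> c * ((1 - a)/8)" .
    have "2 * (c * (S/m))^2 = 2 * (c^2 * (S^2/m)) / m"
      by (simp add: power_mult_distrib power_divide power2_eq_square)
    also have "\<dots> \<le> 2 * (c * ((1 - a)/8)) / m"
      using bound assms(1) by (intro divide_right_mono mult_left_mono) auto
    also have "\<dots> = c * (1 - a)/4/m" by simp
    finally show ?thesis .
  qed
  ultimately show ?thesis by linarith
qed

lemma Kc_tendsto_at_top:
  assumes \<xi>: "\<xi> \<in> Omega" and a: "a < 1"
    and ev: "eventually (\<lambda>n. (\<Sum>k=1..n. \<xi> k)^2 / real n \<le> a) sequentially"
    and c: "0 < c" "c \<le> (1 - a)/8"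
  shows "filterlim (Kc c \<xi>) at_top sequentially"
proof -
  define S where "S n = (\<Sum>k=1..n. \<xi> k)" for n
  define \<delta> where "\<delta> = c * (1 - a)/4"
  define G where "G n = ln (Kc c \<xi> n) + c/2 * (S n^2 / real n) - \<delta> * ln (real n)" for n
  obtain N0 where N0: "\<And>n. N0 \<le> n \<Longrightarrow> S n^2 / real n \<le> a"
    using ev unfolding eventually_sequentially S_def by blast
  define N where "N = Suc N0"
  have \<delta>: "0 < \<delta>" using a c by (simp add: \<delta>_def)
  have "0 \<le> a" using order_trans[OF _ N0[OF order_refl]] by simp
  then have c_half: "c \<le> 1/2" using c by simp
  have G_Suc: "G m \<le> G (Suc m)" if m: "N \<le> m" for m
  proof -
    have m0: "0 < real m" using m by (simp add: N_def)
    have S_Suc: "S (Suc m) = S m + \<xi> (Suc m)" by (simp add: S_def)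
    have "(S m + \<xi> (Suc m))^2 / (real m + 1) \<le> a"
      using N0[of "Suc m"] m by (simp add: N_def S_Suc add.commute)
    then have drift: "c/2 * (S m^2/m - (S m + \<xi> (Suc m))^2/(real m + 1)) + c * (1 - a)/4/m
        \<le> - c * (S m/m) * \<xi> (Suc m) - 2 * (c * (S m/m))^2"
      using contrarian_drift_ge[OF m0 Omega_power2_eq_1[OF \<xi>] N0] m c a by (simp add: N_def)
    have ln_K: "ln (Kc c \<xi> m) - c * (S m/m) * \<xi> (Suc m) - 2 * (c * (S m/m))^2
        \<le> ln (Kc c \<xi> (Suc m))"
      using ln_Kc_Suc_ge[OF \<xi> _ c_half, of m] c by (simp add: xbar_def S_def)
    have "ln (real (Suc m)) - ln (real m) = ln (1 + 1/m)"
      using ln_div[of "real (Suc m)" "real m"] m0 by (simp add: field_simps)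
    also have "\<dots> \<le> 1/m" by (rule ln_add_one_self_le_self) simp
    finally have "\<delta> * (ln (real (Suc m)) - ln (real m)) \<le> \<delta> * (1/m)"
      using \<delta> by (intro mult_left_mono) auto
    moreover have "\<delta> * (1/m) = c * (1 - a)/4/m" by (simp add: \<delta>_def)
    moreover have "S (Suc m)^2 / real (Suc m) = (S m + \<xi> (Suc m))^2 / (real m + 1)"
      by (simp add: S_Suc add.commute)
    ultimately show ?thesis
      using drift ln_K unfolding G_def by (simp add: right_diff_distrib)
  qed
  have G_mono: "G N \<le> G n" if "N \<le> n" for n
    using that
  proof (induction n rule: dec_induct)
    case (step n)
    then show ?case using G_Suc[of n] by linarith
  qed simp
  have "G N - c/2 * a + \<delta> * ln (real n) \<le> ln (Kc c \<xi> n)" if "N \<le> n" for n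
  proof -
    have "c/2 * (S n^2 / real n) \<le> c/2 * a"
      using N0[of n] that c by (intro mult_left_mono) (auto simp: N_def)
    then show ?thesis using G_mono[OF that] unfolding G_def by linarith
  qed
  moreover have "filterlim (\<lambda>n. (G N - c/2 * a) + \<delta> * ln (real n)) at_top sequentially"
    by (intro filterlim_tendsto_add_at_top[OF tendsto_const] filterlim_tendsto_pos_mult_at_top[OF tendsto_const \<delta>]
        filterlim_compose[OF ln_at_top filterlim_real_sequentially])
  ultimately have "filterlim (\<lambda>n. ln (Kc c \<xi> n)) at_top sequentially"
    by (elim filterlim_at_top_mono) (auto simp: eventually_sequentially)
  then have "filterlim (\<lambda>n. exp (ln (Kc c \<xi> n))) at_top sequentially"
    by (rule filterlim_compose[OF exp_at_top])
  then show ?thesis using Kc_pos[OF \<xi>] c c_half by simp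
qed

lemma notin_E1_eventually_sq_sum_div_le:
  assumes "\<xi> \<in> Omega" "\<xi> \<notin> E1"
  obtains a where "a < 1" "eventually (\<lambda>n. (\<Sum>k=1..n. \<xi> k)^2 / real n \<le> a) sequentially"
proof -
  define f where "f n = sqrt (real n) * \<bar>xbar \<xi> n\<bar>" for n
  have "limsup (\<lambda>n. ereal (f n)) < 1" using assms unfolding E1_def f_def by auto
  then obtain b where b: "limsup (\<lambda>n. ereal (f n)) < ereal b" "b < 1"
    using ereal_dense2 by force
  have "eventually (\<lambda>n. f n < b) sequentially" using Limsup_lessD[OF b(1)] by simp
  moreover have "f n ^ 2 = (\<Sum>k=1..n. \<xi> k)^2 / real n" for n
    by (simp add: f_def xbar_def power_mult_distrib power_divide) (simp add: power2_eq_square)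
  moreover have "0 \<le> f n" for n by (simp add: f_def)
  ultimately have "eventually (\<lambda>n. (\<Sum>k=1..n. \<xi> k)^2 / real n \<le> (max 0 b)^2) sequentially"
    by (elim eventually_mono) (metis max.cobounded2 power_mono less_imp_le order_trans max.cobounded1)
  moreover have "(max 0 b)^2 < 1" using b(2) by (simp add: abs_square_less_1)
  ultimately show ?thesis using that by blast
qed

lemma Kmix_tendsto_at_top:
  assumes "\<xi> \<in> Omega" "\<xi> \<notin> E1"
  shows "filterlim (Kmix \<xi>) at_top sequentially"
proof -
  obtain a where a: "a < 1" "eventually (\<lambda>n. (\<Sum>k=1..n. \<xi> k)^2 / real n \<le> a) sequentially"
    using notin_E1_eventually_sq_sum_div_le[OF assms] .
  obtain i where i: "(1/2::real) ^ i < (1 - a)/8"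
    using real_arch_pow_inv[of "(1 - a)/8" "1/2"] a(1) by auto
  define c :: real where "c = (1/2) ^ Suc i"
  have "c \<le> (1/2) ^ i" by (simp add: c_def)
  then have c: "0 < c" "c \<le> (1 - a)/8" using i by (simp add: c_def, linarith)
  have "filterlim (\<lambda>n. c * Kc c \<xi> n) at_top sequentially"
    using Kc_tendsto_at_top[OF assms(1) a c] by (intro filterlim_tendsto_pos_mult_at_top[OF tendsto_const c(1)])
  then show ?thesis
    by (rule filterlim_at_top_mono) (use Kmix_ge_term[OF assms(1), of i] in \<open>simp add: c_def\<close>)
qed

theorem theorem1:
  shows "(\<forall>\<xi>\<in>Omega. \<forall>n. Kmix \<xi> n = 1 + capital Q \<xi> n)
       \<and> (\<forall>\<xi>\<in>Omega. \<forall>n. Kmix \<xi> n \<ge> 0)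
       \<and> (\<forall>\<xi>\<in>Omega. \<xi> \<notin> E1 \<longrightarrow> filterlim (Kmix \<xi>) at_top sequentially)
       \<and> forces Q E1"
proof -
  have capital_Q: "capital Q \<xi> = (\<lambda>n. -1 + Kmix \<xi> n)" if "\<xi> \<in> Omega" for \<xi>
    using Kmix_eq_1_plus_capital_Q[OF that] by auto
  have "filterlim (capital Q \<xi>) at_top sequentially" if "\<xi> \<in> Omega" "\<xi> \<notin> E1" for \<xi>
    unfolding capital_Q[OF that(1)]
    by (rule filterlim_tendsto_add_at_top[OF tendsto_const Kmix_tendsto_at_top[OF that]])
  moreover have "-1 \<le> capital Q \<xi> n" if "\<xi> \<in> Omega" for \<xi> n
    using capital_Q[OF that] Kmix_pos[OF that, of n] by (simp add: fun_eq_iff)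
  ultimately show ?thesis
    using Kmix_eq_1_plus_capital_Q Kmix_pos Kmix_tendsto_at_top
    by (auto simp: forces_def less_imp_le)
qed

end
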